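(* Assume $V$ satisfies (V1)–(V3). Then $|\nabla V(x)\cdot x|\to0$ as $|x|\to\infty$.
   Context: $N\ge3$, $\alpha\in(0,N)$. (V1) $V$ continuous, $V\ge0$, $V_\infty:=\lim_{|x|\to\infty}V(x)$ exists and is $>0$; (V2) $V(x)\le V_\infty$ for all $x$; (V3) $V\in C^1(\mathbb R^N)$ and there is $\theta\in[0,1)$ such that for every $x\neq0$ the map $t\mapsto \frac{NV(tx)+\nabla V(tx)\cdot(tx)}{t^\alpha}+\frac{(N-2)^3\theta}{4t^{\alpha+2}|x|^2}$ is nonincreasing on $(0,\infty)$. *)

theory Defs
  imports "HOL-Analysis.Analysis"
begin

end

(* Along a ray t -> t y, hypothesis (V3) says that
     Q(t) = (N V(t y) + t f'(t)) / t^alpha + c / (4 t^(alpha+2) |y|^2),   f(t) = V(t y),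
   is nonincreasing, and f'(1) = grad V(y) . y.  Beyond |y|/2 the potential is eps-close to V_inf,
   so the mean value theorem gives points xi in (1 - delta, 1) and in (1, 1 + delta) where f' is
   O(eps/delta).  Comparing Q(1) with Q(xi) bounds f'(1) from above and below by
   N V_inf ((1 -+ delta)^(-alpha) - 1) + O(eps/delta) + O(|y|^-2); choosing delta, then eps small
   and |y| large gives the claim. *)

theory Submission
  imports Defs "HOL-Real_Asymp.Real_Asymp"
begin

lemma has_real_derivative_along_ray:
  fixes V :: "'a::real_inner \<Rightarrow> real"
  assumes "\<And>x. (V has_derivative (\<lambda>h. G x \<bullet> h)) (at x)"
  shows "((\<lambda>t. V (t *\<^sub>R y)) has_real_derivative G (t *\<^sub>R y) \<bullet> y) (at t)"
proof -
  have "((\<lambda>t. t *\<^sub>R y) has_derivative (\<lambda>h. h *\<^sub>R y)) (at t)"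
    by (intro derivative_eq_intros) auto
  from has_derivative_compose[OF this assms]
  have "((\<lambda>t. V (t *\<^sub>R y)) has_derivative (\<lambda>h. G (t *\<^sub>R y) \<bullet> (h *\<^sub>R y))) (at t)" .
  moreover have "(\<lambda>h. G (t *\<^sub>R y) \<bullet> (h *\<^sub>R y)) = (*) (G (t *\<^sub>R y) \<bullet> y)"
    by (auto simp: mult.commute)
  ultimately show ?thesis by (simp add: has_field_derivative_def)
qed

lemma MVT_small_derivative:
  fixes f f' :: "real \<Rightarrow> real"
  assumes "\<And>t. (f has_real_derivative f' t) (at t)" and "0 < \<delta>"
    and "\<bar>f (a + \<delta>) - f a\<bar> \<le> c"
  obtains \<xi> where "a < \<xi>" "\<xi> < a + \<delta>" "\<bar>f' \<xi>\<bar> \<le> c / \<delta>"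
proof -
  obtain \<xi> where \<xi>: "a < \<xi>" "\<xi> < a + \<delta>" "f (a + \<delta>) - f a = \<delta> * f' \<xi>"
    using MVT2[of a "a + \<delta>" f f'] assms(1,2) by auto
  with assms(2,3) have "\<bar>f' \<xi>\<bar> \<le> c / \<delta>"
    by (simp add: abs_mult field_simps)
  with \<xi> show thesis by (intro that)
qed

lemma eventually_at_infinity_beyond_half_norm:
  fixes P :: "'a::real_normed_vector \<Rightarrow> bool"
  assumes "eventually P at_infinity"
  shows "eventually (\<lambda>y. \<forall>z. norm y / 2 \<le> norm z \<longrightarrow> P z) at_infinity"
proof -
  obtain R where "\<And>z. R \<le> norm z \<Longrightarrow> P z"
    using assms by (auto simp: eventually_at_infinity)
  then show ?thesis
    by (auto simp: eventually_at_infinity intro!: exI[of _ "2 * R"])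
qed

lemma tendsto_divide_norm_square_at_infinity:
  "((\<lambda>y::'a::real_normed_vector. c / (norm y)\<^sup>2) \<longlongrightarrow> 0) at_infinity"
proof -
  have "((\<lambda>r::real. c / r\<^sup>2) \<longlongrightarrow> 0) at_top" by real_asymp
  from filterlim_compose[OF this filterlim_norm_at_top] show ?thesis by (simp add: o_def)
qed

lemma inverse_powr_le_two_powr:
  fixes s \<beta> :: real
  assumes "1/2 \<le> s" "0 \<le> \<beta>"
  shows "1 / s powr \<beta> \<le> 2 powr \<beta>"
proof -
  have "(1/2) powr \<beta> \<le> s powr \<beta>" using assms by (intro powr_mono2) auto
  then show ?thesis
    using assms by (simp add: powr_divide divide_simps mult.commute)
qed

text \<open>The restriction \<open>f t = V (t y)\<close> of the potential to a ray, with \<open>f' t = \<nabla>V (t y) \<bullet> y\<close>;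
  the constant \<open>K\<close> stands for \<open>(N - 2)^3 \<theta> / (4 |y|^2)\<close>.\<close>
locale radial_profile =
  fixes f f' :: "real \<Rightarrow> real" and N \<alpha> K L \<epsilon> :: real
  assumes deriv: "\<And>t. (f has_real_derivative f' t) (at t)"
    and alpha_pos: "0 < \<alpha>" and N_nonneg: "0 \<le> N" and K_nonneg: "0 \<le> K" and L_nonneg: "0 \<le> L"
    and below_limit: "\<And>t. f t \<le> L"
    and near_limit: "\<And>t. 1/2 \<le> t \<Longrightarrow> \<bar>f t - L\<bar> \<le> \<epsilon>"
    and antitone: "\<And>s t. 0 < s \<Longrightarrow> s \<le> t \<Longrightarrow>
      (N * f t + t * f' t) / t powr \<alpha> + K / t powr (\<alpha> + 2)
        \<le> (N * f s + s * f' s) / s powr \<alpha> + K / s powr (\<alpha> + 2)"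
begin

lemma small_derivative_between:
  assumes "1/2 \<le> a" "0 < \<delta>"
  obtains \<xi> where "a < \<xi>" "\<xi> < a + \<delta>" "\<bar>f' \<xi>\<bar> \<le> 2 * \<epsilon> / \<delta>"
proof -
  have "\<bar>f (a + \<delta>) - f a\<bar> \<le> 2 * \<epsilon>"
    using near_limit[of a] near_limit[of "a + \<delta>"] assms by linarith
  with MVT_small_derivative[OF deriv assms(2)] that show thesis by blast
qed

lemma derivative_at_one_upper:
  assumes \<delta>: "0 < \<delta>" "\<delta> \<le> 1/2"
  shows "f' 1 \<le> N * L * (1 / (1 - \<delta>) powr \<alpha> - 1) + N * \<epsilon>
                + 2 powr \<alpha> * (2 * \<epsilon> / \<delta>) + 2 powr (\<alpha> + 2) * K"
proof -
  obtain \<xi> where \<xi>: "1 - \<delta> < \<xi>" "\<xi> < 1" and f'\<xi>: "\<bar>f' \<xi>\<bar> \<le> 2 * \<epsilon> / \<delta>"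
    using small_derivative_between[of "1 - \<delta>" \<delta>] \<delta> by auto
  have \<xi>_pos: "0 < \<xi>" using \<xi> \<delta> by linarith
  have \<epsilon>: "0 \<le> \<epsilon>" using near_limit[of 1] by linarith
  have "N * f \<xi> + \<xi> * f' \<xi> \<le> N * L + 2 * \<epsilon> / \<delta>"
  proof -
    have "\<xi> * f' \<xi> \<le> \<bar>f' \<xi>\<bar>"
      using \<xi> \<xi>_pos by (simp add: abs_mult mult_left_le_one_le order_trans[OF abs_ge_self])
    then show ?thesis using f'\<xi> mult_left_mono[OF below_limit[of \<xi>] N_nonneg] by linarith
  qed
  then have "(N * f \<xi> + \<xi> * f' \<xi>) / \<xi> powr \<alpha> \<le> (N * L + 2 * \<epsilon> / \<delta>) / (1 - \<delta>) powr \<alpha>"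
    using \<xi> \<delta> \<epsilon> alpha_pos N_nonneg L_nonneg by (intro frac_le powr_mono2) auto
  also have "\<dots> \<le> N * L / (1 - \<delta>) powr \<alpha> + 2 powr \<alpha> * (2 * \<epsilon> / \<delta>)"
    using mult_right_mono[OF inverse_powr_le_two_powr[of "1 - \<delta>" \<alpha>], of "2 * \<epsilon> / \<delta>"]
      \<delta> \<epsilon> alpha_pos by (simp add: add_divide_distrib ac_simps)
  finally have quotient_bound: "(N * f \<xi> + \<xi> * f' \<xi>) / \<xi> powr \<alpha>
      \<le> N * L / (1 - \<delta>) powr \<alpha> + 2 powr \<alpha> * (2 * \<epsilon> / \<delta>)" .
  have "K / \<xi> powr (\<alpha> + 2) \<le> 2 powr (\<alpha> + 2) * K"
    using mult_left_mono[OF inverse_powr_le_two_powr[of \<xi> "\<alpha> + 2"] K_nonneg] \<xi> \<delta> alpha_pos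
    by (simp add: mult.commute)
  moreover have "N * f 1 + f' 1 + K \<le> (N * f \<xi> + \<xi> * f' \<xi>) / \<xi> powr \<alpha> + K / \<xi> powr (\<alpha> + 2)"
    using antitone[of \<xi> 1] \<xi> \<xi>_pos by simp
  moreover have "N * (L - \<epsilon>) \<le> N * f 1"
    using near_limit[of 1] N_nonneg by (intro mult_left_mono) auto
  ultimately show ?thesis
    using quotient_bound K_nonneg by (simp add: algebra_simps)
qed

lemma derivative_at_one_lower:
  assumes \<delta>: "0 < \<delta>" "\<delta> \<le> 1/2"
  shows "N * L * (1 / (1 + \<delta>) powr \<alpha> - 1) - (N * \<epsilon> + 4 * \<epsilon> / \<delta>) - K \<le> f' 1"
proof -
  obtain \<xi> where \<xi>: "1 < \<xi>" "\<xi> < 1 + \<delta>" and f'\<xi>: "\<bar>f' \<xi>\<bar> \<le> 2 * \<epsilon> / \<delta>"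
    using small_derivative_between[of 1 \<delta>] \<delta> by auto
  define D where "D = N * \<epsilon> + 4 * \<epsilon> / \<delta>"
  have \<epsilon>: "0 \<le> \<epsilon>" using near_limit[of 1] by linarith
  have D: "0 \<le> D" using \<epsilon> \<delta> N_nonneg by (simp add: D_def)
  have \<xi>_powr: "1 \<le> \<xi> powr \<alpha>" "\<xi> powr \<alpha> \<le> (1 + \<delta>) powr \<alpha>"
    using \<xi> alpha_pos by (auto intro: ge_one_powr_ge_zero powr_mono2)
  have "N * L - D \<le> N * f \<xi> + \<xi> * f' \<xi>"
  proof -
    have "\<bar>\<xi> * f' \<xi>\<bar> \<le> 2 * \<bar>f' \<xi>\<bar>"
      using \<xi> \<delta> by (simp add: abs_mult mult_right_mono)
    moreover have "N * L - N * \<epsilon> \<le> N * f \<xi>"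
      using mult_left_mono[of "L - \<epsilon>" "f \<xi>" N] near_limit[of \<xi>] \<xi> N_nonneg
      by (simp add: right_diff_distrib)
    ultimately show ?thesis using f'\<xi> abs_ge_minus_self[of "\<xi> * f' \<xi>"] by (simp add: D_def)
  qed
  moreover have "N * L / (1 + \<delta>) powr \<alpha> - D \<le> (N * L - D) / \<xi> powr \<alpha>"
  proof -
    have "N * L / (1 + \<delta>) powr \<alpha> \<le> N * L / \<xi> powr \<alpha>"
      using \<xi>_powr N_nonneg L_nonneg by (intro divide_left_mono) (auto intro!: mult_pos_pos)
    moreover have "D / \<xi> powr \<alpha> \<le> D"
      using \<xi>_powr D by (simp add: divide_le_eq mult_le_cancel_left1)
    ultimately show ?thesis by (simp add: diff_divide_distrib)
  qed
  ultimately have "N * L / (1 + \<delta>) powr \<alpha> - D \<le> (N * f \<xi> + \<xi> * f' \<xi>) / \<xi> powr \<alpha>"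
    using \<xi>_powr by (meson divide_right_mono order_trans zero_le_one)
  moreover have "0 \<le> K / \<xi> powr (\<alpha> + 2)" using K_nonneg by simp
  moreover have "(N * f \<xi> + \<xi> * f' \<xi>) / \<xi> powr \<alpha> + K / \<xi> powr (\<alpha> + 2) \<le> N * f 1 + f' 1 + K"
    using antitone[of 1 \<xi>] \<xi> by simp
  moreover have "N * f 1 \<le> N * L" using below_limit N_nonneg by (simp add: mult_left_mono)
  ultimately show ?thesis by (simp add: D_def algebra_simps)
qed

lemma abs_derivative_at_one_le:
  assumes \<delta>: "0 < \<delta>" "\<delta> \<le> 1/2"
  shows "\<bar>f' 1\<bar> \<le> N * L * (1 / (1 - \<delta>) powr \<alpha> - 1 / (1 + \<delta>) powr \<alpha>)
                   + (N + 2 powr (\<alpha> + 1) + 4) * \<epsilon> / \<delta> + (2 powr (\<alpha> + 2) + 1) * K"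
proof -
  define a b where "a = 1 / (1 - \<delta>) powr \<alpha>" and "b = 1 / (1 + \<delta>) powr \<alpha>"
  have \<epsilon>: "0 \<le> \<epsilon>" using near_limit[of 1] by linarith
  have "(1 + \<delta>) powr \<alpha> \<ge> 1" "(1 - \<delta>) powr \<alpha> \<le> 1"
    using \<delta> alpha_pos powr_mono2[of \<alpha> "1 - \<delta>" 1] by (auto intro: ge_one_powr_ge_zero)
  then have "b \<le> 1" "1 \<le> a"
    using \<delta> by (auto simp: a_def b_def divide_simps)
  then have NL: "N * L * (a - 1) \<le> N * L * (a - b)" "- (N * L * (b - 1)) \<le> N * L * (a - b)"
    using N_nonneg L_nonneg by (auto simp flip: mult_minus_right intro!: mult_left_mono)
  have "N * \<epsilon> \<le> N * \<epsilon> / \<delta>"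
    using \<delta> \<epsilon> N_nonneg by (simp add: le_divide_eq mult_left_le)
  moreover have "N * L * (a - b) + (N + 2 powr (\<alpha> + 1) + 4) * \<epsilon> / \<delta> + (2 powr (\<alpha> + 2) + 1) * K
      = N * L * (a - b) + N * \<epsilon> / \<delta> + 2 powr \<alpha> * (2 * \<epsilon> / \<delta>) + 4 * \<epsilon> / \<delta>
        + 2 powr (\<alpha> + 2) * K + K"
    by (simp add: powr_add add_divide_distrib algebra_simps)
  moreover have "0 \<le> 2 powr \<alpha> * (2 * \<epsilon> / \<delta>)" "0 \<le> 4 * \<epsilon> / \<delta>" "0 \<le> 2 powr (\<alpha> + 2) * K"
    using \<epsilon> \<delta> K_nonneg by auto
  ultimately show ?thesis
    using derivative_at_one_upper[OF \<delta>] derivative_at_one_lower[OF \<delta>] NL K_nonneg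
    unfolding a_def[symmetric] b_def[symmetric] by (intro abs_leI) linarith+
qed

end

lemma abs_inner_gradient_le:
  fixes V :: "'a::real_inner \<Rightarrow> real" and G :: "'a \<Rightarrow> 'a"
  assumes grad: "\<And>x. (V has_derivative (\<lambda>h. G x \<bullet> h)) (at x)"
    and "0 < \<alpha>" "0 \<le> N" "0 \<le> c" "0 \<le> L" and below: "\<And>x. V x \<le> L"
    and mono: "\<And>x s t. x \<noteq> 0 \<Longrightarrow> 0 < s \<Longrightarrow> s \<le> t \<Longrightarrow>
        (N * V (t *\<^sub>R x) + G (t *\<^sub>R x) \<bullet> (t *\<^sub>R x)) / t powr \<alpha> + c / (4 * t powr (\<alpha> + 2) * (norm x)\<^sup>2)
        \<le> (N * V (s *\<^sub>R x) + G (s *\<^sub>R x) \<bullet> (s *\<^sub>R x)) / s powr \<alpha> + c / (4 * s powr (\<alpha> + 2) * (norm x)\<^sup>2)"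
    and y: "y \<noteq> 0" and near: "\<And>z. norm y / 2 \<le> norm z \<Longrightarrow> \<bar>V z - L\<bar> \<le> \<epsilon>"
    and \<delta>: "0 < \<delta>" "\<delta> \<le> 1/2"
  shows "\<bar>G y \<bullet> y\<bar> \<le> N * L * (1 / (1 - \<delta>) powr \<alpha> - 1 / (1 + \<delta>) powr \<alpha>)
    + (N + 2 powr (\<alpha> + 1) + 4) * \<epsilon> / \<delta> + (2 powr (\<alpha> + 2) + 1) * (c / (4 * (norm y)\<^sup>2))"
proof -
  interpret radial_profile "\<lambda>t. V (t *\<^sub>R y)" "\<lambda>t. G (t *\<^sub>R y) \<bullet> y" N \<alpha> "c / (4 * (norm y)\<^sup>2)" L \<epsilon>
  proof
    show "((\<lambda>t. V (t *\<^sub>R y)) has_real_derivative G (t *\<^sub>R y) \<bullet> y) (at t)" for t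
      using has_real_derivative_along_ray[OF grad] .
    show "\<bar>V (t *\<^sub>R y) - L\<bar> \<le> \<epsilon>" if "1/2 \<le> t" for t
      using near that y by (auto intro!: mult_right_mono)
    show "(N * V (t *\<^sub>R y) + t * (G (t *\<^sub>R y) \<bullet> y)) / t powr \<alpha> + c / (4 * (norm y)\<^sup>2) / t powr (\<alpha> + 2)
        \<le> (N * V (s *\<^sub>R y) + s * (G (s *\<^sub>R y) \<bullet> y)) / s powr \<alpha> + c / (4 * (norm y)\<^sup>2) / s powr (\<alpha> + 2)"
      if "0 < s" "s \<le> t" for s t
      using mono[OF y that] by (simp add: ac_simps)
  qed (use assms in auto)
  show ?thesis using abs_derivative_at_one_le[OF \<delta>] by simp
qed

lemma exists_small_powr_gap:
  fixes M \<alpha> e :: real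
  assumes "0 < e"
  obtains \<delta> where "0 < \<delta>" "\<delta> \<le> 1/2" "M * (1 / (1 - \<delta>) powr \<alpha> - 1 / (1 + \<delta>) powr \<alpha>) < e"
proof -
  have "((\<lambda>\<delta>. M * (1 / (1 - \<delta>) powr \<alpha> - 1 / (1 + \<delta>) powr \<alpha>))
      \<longlongrightarrow> M * (1 / (1 - 0) powr \<alpha> - 1 / (1 + 0) powr \<alpha>)) (at_right 0)"
    by (intro tendsto_intros) auto
  then have "\<forall>\<^sub>F \<delta> in at_right 0. M * (1 / (1 - \<delta>) powr \<alpha> - 1 / (1 + \<delta>) powr \<alpha>) < e"
    using assms by (auto dest!: tendstoD[where e = e] elim!: eventually_mono)
  moreover have "\<forall>\<^sub>F \<delta> in at_right 0. 0 < \<delta> \<and> \<delta> \<le> (1/2 :: real)"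
    by (auto simp: eventually_at_right_field intro!: exI[of _ "1/2"])
  ultimately have "\<forall>\<^sub>F \<delta> in at_right 0. 0 < \<delta> \<and> \<delta> \<le> 1/2
      \<and> M * (1 / (1 - \<delta>) powr \<alpha> - 1 / (1 + \<delta>) powr \<alpha>) < e"
    by eventually_elim auto
  with eventually_happens'[OF trivial_limit_at_right_real] that show thesis by blast
qed

theorem lemma2p0:
  fixes V :: "real ^ 'n \<Rightarrow> real"
    and gradV :: "real ^ 'n \<Rightarrow> real ^ 'n"
    and \<alpha> V_inf \<theta> :: real
  assumes dim: "CARD('n) \<ge> 3"
    and alpha: "0 < \<alpha>" "\<alpha> < real CARD('n)"
    and V1_cont: "continuous_on UNIV V"
    and V1_nonneg: "\<And>x. V x \<ge> 0"
    and V1_lim: "(V \<longlongrightarrow> V_inf) at_infinity"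
    and V1_pos: "V_inf > 0"
    and V2: "\<And>x. V x \<le> V_inf"
    and V3_grad: "\<And>x. (V has_derivative (\<lambda>h. gradV x \<bullet> h)) (at x)"
    and V3_C1: "continuous_on UNIV gradV"
    and V3_theta: "0 \<le> \<theta>" "\<theta> < 1"
    and V3_mono: "\<And>x s t. x \<noteq> 0 \<Longrightarrow> 0 < s \<Longrightarrow> s \<le> t \<Longrightarrow>
        (real CARD('n) * V (t *\<^sub>R x) + gradV (t *\<^sub>R x) \<bullet> (t *\<^sub>R x)) / t powr \<alpha>
          + (real CARD('n) - 2) ^ 3 * \<theta> / (4 * t powr (\<alpha> + 2) * (norm x)\<^sup>2)
        \<le> (real CARD('n) * V (s *\<^sub>R x) + gradV (s *\<^sub>R x) \<bullet> (s *\<^sub>R x)) / s powr \<alpha>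
          + (real CARD('n) - 2) ^ 3 * \<theta> / (4 * s powr (\<alpha> + 2) * (norm x)\<^sup>2)"
  shows "((\<lambda>x. \<bar>gradV x \<bullet> x\<bar>) \<longlongrightarrow> 0) at_infinity"
proof (rule tendstoI)
  fix e :: real assume e: "0 < e"
  define N where "N = real CARD('n)"
  define C where "C = N + 2 powr (\<alpha> + 1) + 4"
  define c where "c = (N - 2) ^ 3 * \<theta>"
  have c: "0 \<le> c" using dim V3_theta by (simp add: c_def N_def)
  obtain \<delta> where \<delta>: "0 < \<delta>" "\<delta> \<le> 1/2"
    and gap: "N * V_inf * (1 / (1 - \<delta>) powr \<alpha> - 1 / (1 + \<delta>) powr \<alpha>) < e / 3"
    using exists_small_powr_gap[of "e / 3"] e by auto
  define \<epsilon> where "\<epsilon> = e * \<delta> / (4 * C)"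
  have \<epsilon>: "0 < \<epsilon>" "C * \<epsilon> / \<delta> < e / 3"
    using e \<delta> by (simp_all add: \<epsilon>_def C_def N_def field_simps add_pos_nonneg)
  define k where "k = (2 powr (\<alpha> + 2) + 1) * c / 4"
  have k: "0 \<le> k" using c by (simp add: k_def)
  have "\<forall>\<^sub>F y in at_infinity. k / (norm y)\<^sup>2 < e / 3"
    using tendsto_divide_norm_square_at_infinity[of k] e k
    by (auto dest!: tendstoD[where e = "e / 3"] elim!: eventually_mono)
  moreover have "\<forall>\<^sub>F y in at_infinity. \<forall>z. norm y / 2 \<le> norm z \<longrightarrow> \<bar>V z - V_inf\<bar> \<le> \<epsilon>"
    using tendstoD[OF V1_lim \<epsilon>(1)] unfolding dist_real_def
    by (intro eventually_at_infinity_beyond_half_norm) (auto elim!: eventually_mono)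
  moreover have "\<forall>\<^sub>F y in at_infinity. y \<noteq> (0 :: real ^ 'n)"
    by (auto simp: eventually_at_infinity intro!: exI[of _ 1])
  ultimately show "\<forall>\<^sub>F y in at_infinity. dist \<bar>gradV y \<bullet> y\<bar> 0 < e"
  proof eventually_elim
    case (elim y)
    have "\<bar>gradV y \<bullet> y\<bar> \<le> N * V_inf * (1 / (1 - \<delta>) powr \<alpha> - 1 / (1 + \<delta>) powr \<alpha>)
        + C * \<epsilon> / \<delta> + k / (norm y)\<^sup>2"
      using abs_inner_gradient_le[OF V3_grad alpha(1) _ c V1_pos[THEN less_imp_le] V2
          V3_mono[folded N_def, folded c_def] _ _ \<delta>, of y \<epsilon>] elim
      by (simp add: C_def N_def k_def)
    with gap \<epsilon>(2) elim have "\<bar>gradV y \<bullet> y\<bar> < e" by linarith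
    then show ?case by simp
  qed
qed

end
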